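(* Let $E$ be an IL FS encoder with $s$ states whose Kraft matrix is irreducible, let $L_{\max}=\max_{z,x}L[f(z,x)]$, let $\ell$ be a positive integer, and let $(Z,X^\ell)$ be random variables with an arbitrary joint distribution $P$ on $\mathcal{Z}\times\mathcal{X}^\ell$. Then $$\frac{\mathbb{E}\{L[f(Z,X^\ell)]\}}{\ell}\ \ge\ \frac{H(Z,X^\ell)}{\ell}-\frac{2\log_2 s+(s-1)L_{\max}}{\ell}\ \ge\ \frac{H(X^\ell)}{\ell}-\frac{2\log_2 s+(s-1)L_{\max}}{\ell},$$ where entropies are in bits. If moreover the marginal of $X^\ell$ is the $\ell$-dimensional marginal of a stationary process, then $$\frac{\mathbb{E}\{L[f(Z,X^\ell)]\}}{\ell}\ \ge\ H(X_\ell\mid X^{\ell-1})-\frac{2\log_2 s+(s-1)L_{\max}}{\ell}.$$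
   Context: A finite-state (FS) encoder is a quintuple $E=(\mathcal{X},\mathcal{Y},\mathcal{Z},f,g)$, where $\mathcal{X}$ is a finite source alphabet of size $\alpha$, $\mathcal{Y}$ is a finite set of binary strings (possibly containing the empty string, of length $0$), $\mathcal{Z}$ is a finite set of $s$ states, $f:\mathcal{Z}\times\mathcal{X}\to\mathcal{Y}$ is the output function and $g:\mathcal{Z}\times\mathcal{X}\to\mathcal{Z}$ is the next-state function. For $z\in\mathcal{Z}$ and $x^n=(x_1,\dots,x_n)\in\mathcal{X}^n$, set $z_1=z$, $z_{i+1}=g(z_i,x_i)$; write $g(z,x^n)=z_{n+1}$ and let $f(z,x^n)$ denote the binary string obtained by concatenating $f(z_1,x_1),\dots,f(z_n,x_n)$; its length is $L[f(z,x^n)]=\sum_{i=1}^n L[f(z_i,x_i)]$, where $L(\cdot)$ denotes the length of a binary string. The encoder is information lossless (IL) if for every $z\in\mathcal{Z}$ and every $n\ge1$, the map $x^n\mapsto (f(z,x^n),g(z,x^n))$ is injective on $\mathcal{X}^n$. The Kraft matrix of $E$ is the $s\times s$ nonnegative matrix $K$ with entries $K_{zz'}=\sum_{\{x\in\mathcal{X}:\ g(z,x)=z'\}}2^{-L[f(z,x)]}$ (an empty sum is $0$). *)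

theory Defs
  imports Complex_Main
begin

text \<open>An FS encoder: source alphabet = finite type 'x, states = finite type 'z,
  output function f :: 'z \<Rightarrow> 'x \<Rightarrow> bool list (binary strings),
  next-state function g :: 'z \<Rightarrow> 'x \<Rightarrow> 'z.\<close>

fun fstar :: "('z \<Rightarrow> 'x \<Rightarrow> bool list) \<Rightarrow> ('z \<Rightarrow> 'x \<Rightarrow> 'z) \<Rightarrow> 'z \<Rightarrow> 'x list \<Rightarrow> bool list" where
  "fstar f g z [] = []"
| "fstar f g z (x # xs) = f z x @ fstar f g (g z x) xs"

fun gstar :: "('z \<Rightarrow> 'x \<Rightarrow> 'z) \<Rightarrow> 'z \<Rightarrow> 'x list \<Rightarrow> 'z" where
  "gstar g z [] = z"
| "gstar g z (x # xs) = gstar g (g z x) xs"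

definition info_lossless :: "('z \<Rightarrow> 'x \<Rightarrow> bool list) \<Rightarrow> ('z \<Rightarrow> 'x \<Rightarrow> 'z) \<Rightarrow> bool" where
  "info_lossless f g \<longleftrightarrow>
     (\<forall>z n. n \<ge> 1 \<longrightarrow> inj_on (\<lambda>xs. (fstar f g z xs, gstar g z xs)) {xs. length xs = n})"

definition kraft_matrix :: "('z \<Rightarrow> 'x::finite \<Rightarrow> bool list) \<Rightarrow> ('z \<Rightarrow> 'x \<Rightarrow> 'z) \<Rightarrow> 'z \<Rightarrow> 'z \<Rightarrow> real" where
  "kraft_matrix f g z z' = (\<Sum>x\<in>{x. g z x = z'}. 2 powr (- real (length (f z x))))"

fun mat_pow :: "('z::finite \<Rightarrow> 'z \<Rightarrow> real) \<Rightarrow> nat \<Rightarrow> 'z \<Rightarrow> 'z \<Rightarrow> real" where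
  "mat_pow K 0 = (\<lambda>z z'. if z = z' then 1 else 0)"
| "mat_pow K (Suc n) = (\<lambda>z z'. \<Sum>w\<in>UNIV. mat_pow K n z w * K w z')"

definition irreducible_matrix :: "('z::finite \<Rightarrow> 'z \<Rightarrow> real) \<Rightarrow> bool" where
  "irreducible_matrix K \<longleftrightarrow> (\<forall>z z'. \<exists>k\<ge>1. mat_pow K k z z' > 0)"

definition L_max :: "('z::finite \<Rightarrow> 'x::finite \<Rightarrow> bool list) \<Rightarrow> nat" where
  "L_max f = Max {length (f z x) | z x. True}"

definition is_pmf_on :: "'a set \<Rightarrow> ('a \<Rightarrow> real) \<Rightarrow> bool" where
  "is_pmf_on A p \<longleftrightarrow> (\<forall>a. p a \<ge> 0) \<and> (\<forall>a. a \<notin> A \<longrightarrow> p a = 0) \<and> (\<Sum>a\<in>A. p a) = 1"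

definition entropy2 :: "'a set \<Rightarrow> ('a \<Rightarrow> real) \<Rightarrow> real" where
  "entropy2 A p = - (\<Sum>a\<in>A. if p a = 0 then 0 else p a * log 2 (p a))"

abbreviation words :: "nat \<Rightarrow> 'x list set" where
  "words n \<equiv> {xs. length xs = n}"

text \<open>A stationary process over the finite alphabet 'x, given by its family of
  finite-dimensional marginals Q n (a pmf on words of length n), which is
  consistent and shift-invariant.\<close>
definition stationary_process :: "(nat \<Rightarrow> 'x::finite list \<Rightarrow> real) \<Rightarrow> bool" where
  "stationary_process Q \<longleftrightarrow>
     (\<forall>n. is_pmf_on (words n) (Q n)) \<and>
     (\<forall>n xs. length xs = n \<longrightarrow> Q n xs = (\<Sum>a\<in>UNIV. Q (Suc n) (xs @ [a]))) \<and>
     (\<forall>n xs. length xs = n \<longrightarrow> Q n xs = (\<Sum>a\<in>UNIV. Q (Suc n) (a # xs)))"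

definition cond_entropy_last :: "(nat \<Rightarrow> 'x list \<Rightarrow> real) \<Rightarrow> nat \<Rightarrow> real" where
  "cond_entropy_last Q l =
     - (\<Sum>xs\<in>words l. if Q l xs = 0 then 0
          else Q l xs * log 2 (Q l xs / Q (l - 1) (butlast xs)))"

end

theory Submission
  imports Defs
begin

(* Let K be the Kraft matrix. Expanding K^n along the encoder, K^n(z,z') is the sum of
   2^(-L[f(z,x^n)]) over the words x^n driving z to z'. Information losslessness makes
   these codewords distinct, and there are at most 2^k binary words of each length
   k <= n Lmax, so K^n(z,z') <= n Lmax + 1 grows at most linearly. Positive entries of K
   are at least 2^(-Lmax), and by irreducibility z' returns to z in at most s - 1 steps,
   so an entry K^n(z,z') > 2^((s-1) Lmax) would give a diagonal entry b > 1 of K^(n+k),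
   and then K^(j(n+k))(z,z) >= b^j would grow exponentially. Hence all entries of all
   powers of K are at most 2^((s-1) Lmax). Gibbs' inequality against the weights
   2^(-L[f(z,x^l)]) bounds H(Z,X^l) - E L by log of the sum of the entries of K^l, that is
   by 2 log s + (s-1) Lmax. For a stationary process, Gibbs' inequality against the
   Markov extension of the (m+1)-marginal gives H_(m+2) + H_m <= 2 H_(m+1), so the
   conditional entropies H(X_n | X^(n-1)) = H_n - H_(n-1) decrease and
   l H(X_l | X^(l-1)) <= H(X^l) <= H(Z,X^l). *)

section \<open>Sums over words\<close>

lemma finite_words: "finite (words n :: 'x::finite list set)"
  using finite_lists_length_eq[of "UNIV :: 'x set" n] by simp

lemma sum_words_Suc_Cons:
  "(\<Sum>ys\<in>words (Suc n). F ys) = (\<Sum>x\<in>(UNIV :: 'x::finite set). \<Sum>xs\<in>words n. F (x # xs))"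
proof -
  have "words (Suc n) = (\<lambda>(x :: 'x, xs). x # xs) ` (UNIV \<times> words n)"
    by (auto simp: length_Suc_conv image_iff)
  moreover have "inj_on (\<lambda>(x :: 'x, xs). x # xs) (UNIV \<times> words n)"
    by (auto simp: inj_on_def)
  ultimately show ?thesis
    by (simp add: sum.reindex sum.cartesian_product finite_words split_def)
qed

lemma sum_words_Suc_snoc:
  "(\<Sum>ys\<in>words (Suc n). F ys) = (\<Sum>xs\<in>words n. \<Sum>x\<in>(UNIV :: 'x::finite set). F (xs @ [x]))"
proof -
  have "words (Suc n) = (\<lambda>(xs, x :: 'x). xs @ [x]) ` (words n \<times> UNIV)"
    by (auto simp: image_iff) (metis append_butlast_last_id length_butlast length_greater_0_conv
        diff_Suc_1 zero_less_Suc)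
  moreover have "inj_on (\<lambda>(xs, x :: 'x). xs @ [x]) (words n \<times> UNIV)"
    by (auto simp: inj_on_def)
  ultimately show ?thesis
    by (simp add: sum.reindex sum.cartesian_product finite_words split_def)
qed

section \<open>Powers of nonnegative matrices\<close>

lemma mat_pow_nonneg:
  assumes "\<And>a b. K a b \<ge> 0"
  shows "mat_pow K n a b \<ge> 0"
  by (induction n arbitrary: b) (auto intro!: sum_nonneg mult_nonneg_nonneg assms)

lemma mat_pow_add:
  "mat_pow K (n + k) a c = (\<Sum>w\<in>UNIV. mat_pow K n a w * mat_pow K k w c)"
proof (induction k arbitrary: c)
  case 0
  then show ?case by (simp add: if_distrib cong: if_cong)
next
  case (Suc k)
  have "mat_pow K (n + Suc k) a c = (\<Sum>v\<in>UNIV. \<Sum>w\<in>UNIV. mat_pow K n a w * mat_pow K k w v * K v c)"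
    by (simp add: Suc sum_distrib_right)
  also have "\<dots> = (\<Sum>w\<in>UNIV. mat_pow K n a w * mat_pow K (Suc k) w c)"
    by (subst sum.swap) (simp add: mult.assoc sum_distrib_left)
  finally show ?case .
qed

lemma mat_pow_1: "mat_pow K 1 a b = K a b"
  by (simp add: if_distrib[where f = "\<lambda>t. t * K _ b"] cong: if_cong)

lemma mat_pow_Suc_left: "mat_pow K (Suc n) a c = (\<Sum>w\<in>UNIV. K a w * mat_pow K n w c)"
  using mat_pow_add[of K 1 n a c] by (simp only: mat_pow_1 plus_1_eq_Suc)

lemma mat_pow_add_ge:
  assumes "\<And>a b. K a b \<ge> 0"
  shows "mat_pow K n a w * mat_pow K k w c \<le> mat_pow K (n + k) a c"
  unfolding mat_pow_add by (rule member_le_sum) (auto intro: mult_nonneg_nonneg mat_pow_nonneg assms)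

lemma mat_pow_Suc_pos_iff:
  assumes nonneg: "\<And>a b. K a b \<ge> 0"
  shows "mat_pow K (Suc k) a b > 0 \<longleftrightarrow> (\<exists>w. mat_pow K k a w > 0 \<and> K w b > 0)"
proof -
  have terms_nonneg: "mat_pow K k a w * K w b \<ge> 0" for w
    by (intro mult_nonneg_nonneg mat_pow_nonneg nonneg)
  have "mat_pow K (Suc k) a b > 0 \<longleftrightarrow> (\<exists>w. mat_pow K k a w * K w b \<noteq> 0)"
    using sum_nonneg_eq_0_iff[of UNIV "\<lambda>w. mat_pow K k a w * K w b"] terms_nonneg
    by (auto simp: less_le intro: sum_nonneg)
  also have "\<dots> \<longleftrightarrow> (\<exists>w. mat_pow K k a w > 0 \<and> K w b > 0)"
    using mat_pow_nonneg[of K k a, OF nonneg] nonneg by (auto simp: less_le)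
  finally show ?thesis .
qed

lemma mat_pow_pos_iff_relpowp:
  assumes "\<And>a b. K a b \<ge> 0"
  shows "mat_pow K k a b > 0 \<longleftrightarrow> ((\<lambda>u v. K u v > 0) ^^ k) a b"
proof (induction k arbitrary: b)
  case (Suc k)
  then show ?case
    by (simp del: mat_pow.simps add: mat_pow_Suc_pos_iff[OF assms] relcompp_apply)
qed simp

lemma relpowp_shortcut:
  fixes P :: "'a::finite \<Rightarrow> 'a \<Rightarrow> bool"
  assumes "(P ^^ n) a b"
  shows "\<exists>k < card (UNIV :: 'a set). (P ^^ k) a b"
  using assms
proof (induction n rule: less_induct)
  case (less n)
  show ?case
  proof (cases "n < card (UNIV :: 'a set)")
    case True
    with less.prems show ?thesis by blast
  next
    case False
    obtain p where p: "p 0 = a" "p n = b" "\<And>t. t < n \<Longrightarrow> P (p t) (p (Suc t))"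
      using less.prems unfolding relpowp_fun_conv by blast
    have "\<not> inj_on p {..n}"
    proof
      assume "inj_on p {..n}"
      then have "card (p ` {..n}) = Suc n" by (simp add: card_image)
      moreover have "card (p ` {..n}) \<le> card (UNIV :: 'a set)" by (rule card_mono) auto
      ultimately show False using False by simp
    qed
    \<comment> \<open>the path visits some state twice; cut out the cycle in between\<close>
    then obtain i j where ij: "i < j" "j \<le> n" "p i = p j"
      unfolding inj_on_def by (metis atMost_iff linorder_neqE_nat)
    define q where "q t = (if t \<le> i then p t else p (t + (j - i)))" for t
    have "q 0 = a" "q (n - (j - i)) = b"
      using p ij by (auto simp: q_def le_diff_conv)
    moreover have "P (q t) (q (Suc t))" if "t < n - (j - i)" for t
      using p(3)[of t] p(3)[of "t + (j - i)"] that ij by (cases "t = i") (auto simp: q_def)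
    ultimately have "(P ^^ (n - (j - i))) a b"
      unfolding relpowp_fun_conv by blast
    then show ?thesis
      using ij by (intro less.IH) auto
  qed
qed

lemma mat_pow_pos_ge_power:
  assumes nonneg: "\<And>a b. K a b \<ge> 0" and "\<delta> \<ge> 0"
    and pos_ge: "\<And>a b. K a b > 0 \<Longrightarrow> \<delta> \<le> K a b"
    and "mat_pow K k a b > 0"
  shows "\<delta> ^ k \<le> mat_pow K k a b"
  using assms(4)
proof (induction k arbitrary: b)
  case (Suc k)
  then obtain w where w: "mat_pow K k a w > 0" "K w b > 0"
    using mat_pow_Suc_pos_iff[of K, OF nonneg] by blast
  have "\<delta> ^ Suc k \<le> mat_pow K k a w * K w b"
    unfolding power_Suc2
    using Suc.IH[OF w(1)] pos_ge[OF w(2)] \<open>\<delta> \<ge> 0\<close>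
    by (intro mult_mono) (auto intro: mat_pow_nonneg nonneg)
  also have "\<dots> \<le> mat_pow K (Suc k) a b"
    using mat_pow_add_ge[of K, OF nonneg, of k a w 1 b] by (simp only: mat_pow_1 Suc_eq_plus1)
  finally show ?case .
qed (simp split: if_splits)

lemma power_not_linearly_bounded:
  fixes b C :: real
  assumes "b > 1"
  obtains j where "real j * C + 1 < b ^ j"
proof -
  have "(\<lambda>j. C * (real j / b ^ j) + inverse (b ^ j)) \<longlonglongrightarrow> C * 0 + 0"
    using assms by (intro tendsto_intros lim_n_over_pown LIMSEQ_inverse_realpow_zero) auto
  moreover have "(\<lambda>j. C * (real j / b ^ j) + inverse (b ^ j)) = (\<lambda>j. (real j * C + 1) / b ^ j)"
    using assms by (simp add: fun_eq_iff field_simps)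
  ultimately have "\<forall>\<^sub>F j in sequentially. (real j * C + 1) / b ^ j < 1"
    by (simp add: order_tendstoD)
  then obtain j where "(real j * C + 1) / b ^ j < 1"
    using eventually_sequentially by auto
  then show ?thesis
    using that[of j] assms by (simp add: pos_divide_less_eq)
qed

lemma mat_pow_le_if_linear_growth:
  fixes K :: "'z::finite \<Rightarrow> 'z \<Rightarrow> real"
  assumes nonneg: "\<And>a b. K a b \<ge> 0" and irr: "irreducible_matrix K"
    and \<delta>: "0 < \<delta>" "\<delta> \<le> 1" and pos_ge: "\<And>a b. K a b > 0 \<Longrightarrow> \<delta> \<le> K a b"
    and linear: "\<And>n a. mat_pow K n a a \<le> real n * C + 1"
  shows "mat_pow K n z z' \<le> (1 / \<delta>) ^ (card (UNIV :: 'z set) - 1)"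
proof (rule ccontr)
  define B where "B = (1 / \<delta>) ^ (card (UNIV :: 'z set) - 1)"
  assume "\<not> mat_pow K n z z' \<le> B"
  then have large: "mat_pow K n z z' > B" by simp
  obtain k where k: "k < card (UNIV :: 'z set)" "mat_pow K k z' z > 0"
  proof -
    obtain k0 where "mat_pow K k0 z' z > 0"
      using irr unfolding irreducible_matrix_def by blast
    then show thesis
      using that relpowp_shortcut unfolding mat_pow_pos_iff_relpowp[of K, OF nonneg] by blast
  qed
  have "1 / B = \<delta> ^ (card (UNIV :: 'z set) - 1)"
    by (simp add: B_def power_one_over)
  also have "\<dots> \<le> \<delta> ^ k"
    using k(1) \<delta> by (intro power_decreasing) auto
  also have "\<dots> \<le> mat_pow K k z' z"
    using mat_pow_pos_ge_power[of K, OF nonneg _ pos_ge k(2)] \<delta> by simp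
  finally have return_walk: "1 / B \<le> mat_pow K k z' z" .
  \<comment> \<open>going around the closed walk z \<rightarrow> z' \<rightarrow> z repeatedly makes the diagonal grow exponentially\<close>
  define m where "m = n + k"
  define b where "b = mat_pow K m z z"
  have "B > 0" using \<delta> by (simp add: B_def)
  have "1 = B * (1 / B)" using \<open>B > 0\<close> by simp
  also have "\<dots> < mat_pow K n z z' * mat_pow K k z' z"
    using large return_walk \<open>B > 0\<close> by (intro mult_less_le_imp_less) auto
  also have "\<dots> \<le> b"
    unfolding b_def m_def by (rule mat_pow_add_ge[of K, OF nonneg])
  finally have "b > 1" .
  have powers: "b ^ j \<le> mat_pow K (j * m) z z" for j
  proof (induction j)
    case (Suc j)
    have "b ^ Suc j \<le> mat_pow K (j * m) z z * mat_pow K m z z"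
      using Suc \<open>b > 1\<close> unfolding power_Suc2 b_def
      by (intro mult_mono) (auto intro: mat_pow_nonneg nonneg)
    also have "\<dots> \<le> mat_pow K (Suc j * m) z z"
      using mat_pow_add_ge[of K, OF nonneg, of "j * m" z z m z] by (simp add: add.commute)
    finally show ?case .
  qed simp
  obtain j where "real j * (real m * C) + 1 < b ^ j"
    using power_not_linearly_bounded[OF \<open>b > 1\<close>] .
  with powers[of j] linear[of "j * m" z] show False
    by (simp add: algebra_simps)
qed

section \<open>The Kraft matrix of an information lossless encoder\<close>

lemma kraft_matrix_nonneg: "kraft_matrix f g a b \<ge> 0"
  by (simp add: kraft_matrix_def sum_nonneg)

lemma length_le_L_max: "length (f z x) \<le> L_max (f :: 'z::finite \<Rightarrow> 'x::finite \<Rightarrow> bool list)"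
proof -
  have "{length (f z x) | z x. True} = (\<lambda>(z, x). length (f z x)) ` UNIV" by auto
  then show ?thesis
    unfolding L_max_def by (intro Max_ge) auto
qed

lemma kraft_matrix_pos_ge:
  fixes f :: "'z::finite \<Rightarrow> 'x::finite \<Rightarrow> bool list"
  assumes "kraft_matrix f g a b > 0"
  shows "1 / 2 ^ L_max f \<le> kraft_matrix f g a b"
proof -
  obtain x where x: "g a x = b"
    using assms unfolding kraft_matrix_def by force
  have "1 / 2 ^ L_max f = 2 powr (- real (L_max f))"
    by (simp add: powr_minus powr_realpow divide_inverse)
  also have "\<dots> \<le> 2 powr (- real (length (f a x)))"
    using length_le_L_max[of f a x] by simp
  also have "\<dots> \<le> kraft_matrix f g a b"
    unfolding kraft_matrix_def using x by (intro member_le_sum) auto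
  finally show ?thesis .
qed

lemma mat_pow_kraft_matrix:
  fixes f :: "'z::finite \<Rightarrow> 'x::finite \<Rightarrow> bool list"
  shows "mat_pow (kraft_matrix f g) n z z' =
    (\<Sum>xs\<in>words n. if gstar g z xs = z' then 2 powr (- real (length (fstar f g z xs))) else 0)"
proof (induction n arbitrary: z)
  case 0
  have "words 0 = {[] :: 'x list}" by auto
  then show ?case by simp
next
  case (Suc n)
  let ?W = "\<lambda>n w. (\<Sum>xs\<in>words n.
    if gstar g w xs = z' then 2 powr (- real (length (fstar f g w xs))) else (0::real))"
  have "mat_pow (kraft_matrix f g) (Suc n) z z' = (\<Sum>w\<in>UNIV. kraft_matrix f g z w * ?W n w)"
    by (simp only: mat_pow_Suc_left Suc)
  also have "\<dots> = (\<Sum>w\<in>UNIV. \<Sum>x\<in>{x\<in>UNIV. g z x = w}. 2 powr (- real (length (f z x))) * ?W n (g z x))"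
    unfolding kraft_matrix_def sum_distrib_right by (intro sum.cong) auto
  also have "\<dots> = (\<Sum>x\<in>UNIV. 2 powr (- real (length (f z x))) * ?W n (g z x))"
    by (rule sum.group) auto
  also have "\<dots> = ?W (Suc n) z"
    unfolding sum_words_Suc_Cons sum_distrib_left
    by (intro sum.cong refl) (simp add: powr_add[symmetric] algebra_simps)
  finally show ?case .
qed

lemma sum_mat_pow_kraft_matrix:
  fixes f :: "'z::finite \<Rightarrow> 'x::finite \<Rightarrow> bool list"
  shows "(\<Sum>z'\<in>UNIV. mat_pow (kraft_matrix f g) n z z') =
    (\<Sum>xs\<in>words n. 2 powr (- real (length (fstar f g z xs))))"
  unfolding mat_pow_kraft_matrix by (subst sum.swap) (simp add: sum.delta)

lemma length_fstar_le:
  fixes f :: "'z::finite \<Rightarrow> 'x::finite \<Rightarrow> bool list"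
  shows "length (fstar f g z xs) \<le> length xs * L_max f"
proof (induction xs arbitrary: z)
  case (Cons x xs)
  show ?case using Cons.IH[of "g z x"] length_le_L_max[of f z x] by simp
qed simp

lemma kraft_sum_le_max_length:
  assumes "U \<subseteq> {w :: bool list. length w \<le> N}"
  shows "(\<Sum>w\<in>U. 2 powr (- real (length w))) \<le> real N + 1"
proof -
  let ?T = "{w :: bool list. length w \<le> N}"
  have "finite ?T"
    using finite_lists_length_le[of "UNIV :: bool set" N] by simp
  have level: "(\<Sum>w\<in>(words k :: bool list set). 2 powr (- real (length w))) = 1" for k
  proof -
    have card_words: "card (words k :: bool list set) = 2 ^ k"
      using card_lists_length_eq[of "UNIV :: bool set" k] by simp
    show ?thesis by (simp add: card_words powr_minus powr_realpow)
  qed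
  have "(\<Sum>w\<in>U. 2 powr (- real (length w))) \<le> (\<Sum>w\<in>?T. 2 powr (- real (length w)))"
    using \<open>finite ?T\<close> assms by (intro sum_mono2) auto
  also have "\<dots> = (\<Sum>k\<le>N. \<Sum>w\<in>{w\<in>?T. length w = k}. 2 powr (- real (length w)))"
    using \<open>finite ?T\<close> by (intro sum.group[symmetric]) auto
  also have "\<dots> = (\<Sum>k\<le>N. 1)"
  proof (intro sum.cong refl)
    fix k assume "k \<in> {..N}"
    then have "{w\<in>?T. length w = k} = words k" by auto
    then show "(\<Sum>w\<in>{w\<in>?T. length w = k}. 2 powr (- real (length w))) = 1"
      using level by simp
  qed
  finally show ?thesis by simp
qed

lemma mat_pow_kraft_matrix_le_linear:
  fixes f :: "'z::finite \<Rightarrow> 'x::finite \<Rightarrow> bool list"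
  assumes IL: "info_lossless f g"
  shows "mat_pow (kraft_matrix f g) n z z' \<le> real n * real (L_max f) + 1"
proof (cases "n = 0")
  case False
  let ?T = "{xs\<in>words n. gstar g z xs = z'}"
  have "inj_on (\<lambda>xs. (fstar f g z xs, gstar g z xs)) (words n)"
    using IL False unfolding info_lossless_def by auto
  then have inj: "inj_on (fstar f g z) ?T"
    by (auto simp: inj_on_def)
  have "mat_pow (kraft_matrix f g) n z z' = (\<Sum>xs\<in>?T. 2 powr (- real (length (fstar f g z xs))))"
    unfolding mat_pow_kraft_matrix by (simp add: sum.inter_filter[symmetric] finite_words)
  also have "\<dots> = (\<Sum>w\<in>fstar f g z ` ?T. 2 powr (- real (length w)))"
    using sum.reindex[OF inj, of "\<lambda>w. 2 powr (- real (length w))"] by simp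
  also have "\<dots> \<le> real (n * L_max f) + 1"
    using length_fstar_le[of f g z] by (intro kraft_sum_le_max_length) fastforce
  finally show ?thesis by simp
qed simp

lemma mat_pow_kraft_matrix_le:
  fixes f :: "'z::finite \<Rightarrow> 'x::finite \<Rightarrow> bool list"
  assumes "info_lossless f g" and "irreducible_matrix (kraft_matrix f g)"
  shows "mat_pow (kraft_matrix f g) n z z' \<le> 2 ^ ((card (UNIV :: 'z set) - 1) * L_max f)"
  using mat_pow_le_if_linear_growth[of "kraft_matrix f g" "1 / 2 ^ L_max f", OF kraft_matrix_nonneg
      assms(2) _ _ kraft_matrix_pos_ge mat_pow_kraft_matrix_le_linear[OF assms(1)]]
  by (simp add: power_mult mult.commute)

section \<open>Entropy bounds\<close>

lemma entropy2_eq: "entropy2 A p = - (\<Sum>a\<in>A. p a * log 2 (p a))"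
  unfolding entropy2_def by (intro arg_cong[where f = uminus] sum.cong) auto

lemma gibbs_inequality:
  fixes p q :: "'a \<Rightarrow> real"
  assumes "finite A" and p_nonneg: "\<And>a. a \<in> A \<Longrightarrow> p a \<ge> 0" and p_sum: "(\<Sum>a\<in>A. p a) = 1"
    and q_nonneg: "\<And>a. a \<in> A \<Longrightarrow> q a \<ge> 0" and q_pos: "\<And>a. a \<in> A \<Longrightarrow> p a > 0 \<Longrightarrow> q a > 0"
  shows "(\<Sum>a\<in>A. p a * log 2 (q a / p a)) \<le> log 2 (\<Sum>a\<in>A. q a)"
proof -
  define S where "S = (\<Sum>a\<in>A. q a)"
  have "\<exists>a\<in>A. p a > 0"
  proof (rule ccontr)
    assume "\<not> (\<exists>a\<in>A. p a > 0)"
    then have "(\<Sum>a\<in>A. p a) \<le> 0" by (intro sum_nonpos) (simp add: not_less)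
    with p_sum show False by simp
  qed
  then obtain a0 where a0: "a0 \<in> A" "p a0 > 0" by blast
  have "q a0 \<le> S"
    unfolding S_def using \<open>finite A\<close> a0(1) q_nonneg by (intro member_le_sum) auto
  with q_pos[OF a0] have "S > 0" by simp
  \<comment> \<open>ln x \<le> x - 1 applied to x = q a / (S p a)\<close>
  have pointwise: "p a * log 2 (q a / p a) \<le> p a * log 2 S + (q a / S - p a) / ln 2"
    if a: "a \<in> A" for a
  proof (cases "p a = 0")
    case True
    then show ?thesis using q_nonneg[OF a] \<open>S > 0\<close> by simp
  next
    case False
    with p_nonneg[OF a] have "p a > 0" by simp
    with q_pos[OF a] have "q a > 0" by simp
    have "p a * ln (q a / (S * p a)) \<le> p a * (q a / (S * p a) - 1)"
      using \<open>p a > 0\<close> \<open>q a > 0\<close> \<open>S > 0\<close> by (intro mult_left_mono ln_le_minus_one) auto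
    also have "\<dots> = q a / S - p a"
      using \<open>p a > 0\<close> \<open>S > 0\<close> by (simp add: field_simps)
    finally have "p a * ln (q a / (S * p a)) / ln 2 \<le> (q a / S - p a) / ln 2"
      by (simp add: divide_right_mono)
    moreover have "p a * log 2 (q a / p a) = p a * log 2 S + p a * ln (q a / (S * p a)) / ln 2"
      using \<open>p a > 0\<close> \<open>q a > 0\<close> \<open>S > 0\<close> by (simp add: log_def ln_div ln_mult field_simps)
    ultimately show ?thesis by simp
  qed
  have "(\<Sum>a\<in>A. p a * log 2 (q a / p a)) \<le> (\<Sum>a\<in>A. p a * log 2 S + (q a / S - p a) / ln 2)"
    using pointwise by (rule sum_mono)
  also have "\<dots> = log 2 S * (\<Sum>a\<in>A. p a) + ((\<Sum>a\<in>A. q a) / S - (\<Sum>a\<in>A. p a)) / ln 2"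
    by (simp add: sum.distrib sum_distrib_left sum_distrib_right sum_subtractf
        sum_divide_distrib[symmetric] mult.commute)
  also have "\<dots> = log 2 S"
    using p_sum \<open>S > 0\<close> unfolding S_def by simp
  finally show ?thesis unfolding S_def .
qed

lemma entropy2_le_expected_length:
  fixes f :: "'z::finite \<Rightarrow> 'x::finite \<Rightarrow> bool list" and P :: "'z \<times> 'x list \<Rightarrow> real"
  assumes IL: "info_lossless f g" and irr: "irreducible_matrix (kraft_matrix f g)"
    and P: "is_pmf_on (UNIV \<times> words l) P"
  shows "entropy2 (UNIV \<times> words l) P \<le>
    (\<Sum>(z, xs)\<in>UNIV \<times> words l. P (z, xs) * real (length (fstar f g z xs)))
    + (2 * log 2 (real (card (UNIV :: 'z set))) + (real (card (UNIV :: 'z set)) - 1) * real (L_max f))"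
proof -
  let ?A = "(UNIV :: 'z set) \<times> (words l :: 'x list set)"
  let ?s = "card (UNIV :: 'z set)"
  let ?len = "\<lambda>a. real (length (fstar f g (fst a) (snd a)))"
  define q where "q a = 2 powr (- ?len a)" for a
  have "finite ?A" by (simp add: finite_words)
  have P_nonneg: "\<And>a. P a \<ge> 0" and P_sum: "(\<Sum>a\<in>?A. P a) = 1"
    using P unfolding is_pmf_on_def by auto
  have "P a * log 2 (q a / P a) = - (P a * ?len a) - P a * log 2 (P a)" for a
    using P_nonneg[of a] unfolding q_def
    by (cases "P a = 0") (simp_all add: log_divide_pos log_powr_cancel algebra_simps)
  then have "entropy2 ?A P - (\<Sum>a\<in>?A. P a * ?len a) = (\<Sum>a\<in>?A. P a * log 2 (q a / P a))"
    unfolding entropy2_eq by (simp add: sum_subtractf sum_negf)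
  also have "\<dots> \<le> log 2 (\<Sum>a\<in>?A. q a)"
    using \<open>finite ?A\<close> P_nonneg P_sum by (intro gibbs_inequality) (auto simp: q_def)
  also have "\<dots> \<le> log 2 (real ?s * real ?s * 2 ^ ((?s - 1) * L_max f))"
  proof (intro log_mono)
    have "(\<Sum>a\<in>?A. q a) = (\<Sum>z\<in>UNIV. \<Sum>z'\<in>UNIV. mat_pow (kraft_matrix f g) l z z')"
      by (simp add: q_def sum.cartesian_product sum_mat_pow_kraft_matrix split_def)
    also have "\<dots> \<le> (\<Sum>z\<in>(UNIV :: 'z set). \<Sum>z'\<in>(UNIV :: 'z set). 2 ^ ((?s - 1) * L_max f))"
      by (intro sum_mono mat_pow_kraft_matrix_le[OF IL irr])
    finally show "(\<Sum>a\<in>?A. q a) \<le> real ?s * real ?s * 2 ^ ((?s - 1) * L_max f)"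
      by simp
    have "?A \<noteq> {}" by (auto intro: exI[of _ "replicate l undefined"])
    then show "(\<Sum>a\<in>?A. q a) > 0"
      using \<open>finite ?A\<close> by (intro sum_pos) (auto simp: q_def)
  qed simp
  also have "\<dots> = 2 * log 2 (real ?s) + (real ?s - 1) * real (L_max f)"
    using finite_UNIV_card_ge_0[where 'a = 'z] by (simp add: log_mult log_nat_power of_nat_diff)
  finally show ?thesis by (simp add: split_def)
qed

lemma entropy2_marginal_le:
  fixes P :: "'z::finite \<times> 'x::finite list \<Rightarrow> real"
  assumes P: "is_pmf_on (UNIV \<times> words l) P"
  shows "entropy2 (words l) (\<lambda>xs. \<Sum>z\<in>UNIV. P (z, xs)) \<le> entropy2 (UNIV \<times> words l) P"
proof -
  let ?PX = "\<lambda>xs. \<Sum>z\<in>UNIV. P (z, xs)"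
  have P_nonneg: "\<And>a. P a \<ge> 0" using P unfolding is_pmf_on_def by auto
  have pointwise: "P (z, xs) * log 2 (P (z, xs)) \<le> P (z, xs) * log 2 (?PX xs)" for z xs
  proof (cases "P (z, xs) = 0")
    case False
    with P_nonneg have "P (z, xs) > 0" by (simp add: less_le)
    moreover have "P (z, xs) \<le> ?PX xs" by (rule member_le_sum) (auto simp: P_nonneg)
    ultimately show ?thesis by (intro mult_left_mono log_mono) auto
  qed simp
  have "(\<Sum>a\<in>UNIV \<times> words l. P a * log 2 (P a)) \<le>
      (\<Sum>(z, xs)\<in>UNIV \<times> words l. P (z, xs) * log 2 (?PX xs))"
    by (rule sum_mono) (auto simp: pointwise)
  also have "\<dots> = (\<Sum>z\<in>UNIV. \<Sum>xs\<in>words l. P (z, xs) * log 2 (?PX xs))"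
    by (simp add: sum.cartesian_product)
  also have "\<dots> = (\<Sum>xs\<in>words l. ?PX xs * log 2 (?PX xs))"
    by (subst sum.swap) (simp add: sum_distrib_right)
  finally show ?thesis unfolding entropy2_eq by simp
qed

section \<open>Stationary processes\<close>

abbreviation block_entropy :: "(nat \<Rightarrow> 'x list \<Rightarrow> real) \<Rightarrow> nat \<Rightarrow> real" where
  "block_entropy Q n \<equiv> entropy2 (words n) (Q n)"

definition markov_extension :: "(nat \<Rightarrow> 'x list \<Rightarrow> real) \<Rightarrow> nat \<Rightarrow> 'x list \<Rightarrow> real" where
  "markov_extension Q m xs = Q (Suc m) (butlast xs) * Q (Suc m) (tl xs) / Q m (tl (butlast xs))"

context
  fixes Q :: "nat \<Rightarrow> 'x::finite list \<Rightarrow> real"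
  assumes stationary: "stationary_process Q"
begin

lemma stationary_nonneg: "Q n xs \<ge> 0"
  using stationary unfolding stationary_process_def is_pmf_on_def by blast

lemma stationary_sum_eq_1: "(\<Sum>xs\<in>words n. Q n xs) = 1"
  using stationary unfolding stationary_process_def is_pmf_on_def by blast

lemma stationary_snoc: "length ys = n \<Longrightarrow> Q n ys = (\<Sum>a\<in>UNIV. Q (Suc n) (ys @ [a]))"
  using stationary unfolding stationary_process_def by blast

lemma stationary_Cons: "length ys = n \<Longrightarrow> Q n ys = (\<Sum>a\<in>UNIV. Q (Suc n) (a # ys))"
  using stationary unfolding stationary_process_def by blast

lemma stationary_sum_butlast:
  "(\<Sum>xs\<in>words (Suc n). Q (Suc n) xs * F (butlast xs)) = (\<Sum>ys\<in>words n. Q n ys * F ys)"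
  unfolding sum_words_Suc_snoc by (simp add: sum_distrib_right stationary_snoc)

lemma stationary_sum_tl:
  "(\<Sum>xs\<in>words (Suc n). Q (Suc n) xs * F (tl xs)) = (\<Sum>ys\<in>words n. Q n ys * F ys)"
  unfolding sum_words_Suc_Cons by (subst sum.swap) (simp add: sum_distrib_right stationary_Cons)

lemma stationary_le_butlast:
  assumes "length xs = Suc n"
  shows "Q (Suc n) xs \<le> Q n (butlast xs)"
proof -
  have "xs = butlast xs @ [last xs]"
    using assms by (metis append_butlast_last_id length_greater_0_conv zero_less_Suc)
  then have "Q (Suc n) xs \<le> (\<Sum>a\<in>UNIV. Q (Suc n) (butlast xs @ [a]))"
    by (metis UNIV_I finite_UNIV member_le_sum stationary_nonneg)
  also have "\<dots> = Q n (butlast xs)"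
    using assms by (simp add: stationary_snoc)
  finally show ?thesis .
qed

lemma stationary_le_tl:
  assumes "length xs = Suc n"
  shows "Q (Suc n) xs \<le> Q n (tl xs)"
proof -
  have "xs = hd xs # tl xs"
    using assms by (metis hd_Cons_tl length_greater_0_conv zero_less_Suc)
  then have "Q (Suc n) xs \<le> (\<Sum>a\<in>UNIV. Q (Suc n) (a # tl xs))"
    by (metis UNIV_I finite_UNIV member_le_sum stationary_nonneg)
  also have "\<dots> = Q n (tl xs)"
    using assms by (simp add: stationary_Cons)
  finally show ?thesis .
qed

lemma block_entropy_0: "block_entropy Q 0 = 0"
proof -
  have words_0: "words 0 = {[] :: 'x list}" by auto
  then have "Q 0 [] = 1" using stationary_sum_eq_1[of 0] by simp
  then show ?thesis unfolding entropy2_eq words_0 by simp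
qed

lemma cond_entropy_last_eq_diff:
  "cond_entropy_last Q (Suc n) = block_entropy Q (Suc n) - block_entropy Q n"
proof -
  have "(if Q (Suc n) xs = 0 then 0 else Q (Suc n) xs * log 2 (Q (Suc n) xs / Q n (butlast xs)))
      = Q (Suc n) xs * log 2 (Q (Suc n) xs) - Q (Suc n) xs * log 2 (Q n (butlast xs))"
    if "xs \<in> words (Suc n)" for xs
  proof (cases "Q (Suc n) xs = 0")
    case False
    with stationary_nonneg[of "Suc n" xs] have "Q (Suc n) xs > 0" by simp
    moreover from this have "Q n (butlast xs) > 0"
      using stationary_le_butlast[of xs n] that by simp
    ultimately show ?thesis by (simp add: log_divide_pos algebra_simps)
  qed simp
  then have "cond_entropy_last Q (Suc n) = - (\<Sum>xs\<in>words (Suc n).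
      Q (Suc n) xs * log 2 (Q (Suc n) xs) - Q (Suc n) xs * log 2 (Q n (butlast xs)))"
    unfolding cond_entropy_last_def diff_Suc_1 by (intro arg_cong[where f = uminus] sum.cong) auto
  also have "\<dots> = block_entropy Q (Suc n) - block_entropy Q n"
    unfolding sum_subtractf stationary_sum_butlast[of n "\<lambda>ys. log 2 (Q n ys)"] entropy2_eq
    by simp
  finally show ?thesis .
qed

lemma sum_markov_extension: "(\<Sum>xs\<in>words (Suc (Suc m)). markov_extension Q m xs) = 1"
proof -
  have inner: "(\<Sum>a\<in>UNIV. \<Sum>b\<in>UNIV. markov_extension Q m (a # ys @ [b])) = Q m ys"
    if "ys \<in> words m" for ys
  proof -
    have "(\<Sum>a\<in>UNIV. \<Sum>b\<in>UNIV. markov_extension Q m (a # ys @ [b])) =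
        (\<Sum>a\<in>UNIV. Q (Suc m) (a # ys)) * (\<Sum>b\<in>UNIV. Q (Suc m) (ys @ [b])) / Q m ys"
      unfolding markov_extension_def
      by (simp add: butlast_append sum_divide_distrib sum_product)
    also have "\<dots> = Q m ys"
      using that stationary_Cons[of ys m] stationary_snoc[of ys m] by simp
    finally show ?thesis .
  qed
  have "(\<Sum>xs\<in>words (Suc (Suc m)). markov_extension Q m xs) =
      (\<Sum>a\<in>UNIV. \<Sum>ys\<in>words m. \<Sum>b\<in>UNIV. markov_extension Q m (a # ys @ [b]))"
    by (subst sum_words_Suc_Cons, subst sum_words_Suc_snoc) (rule refl)
  also have "\<dots> = (\<Sum>ys\<in>words m. \<Sum>a\<in>UNIV. \<Sum>b\<in>UNIV. markov_extension Q m (a # ys @ [b]))"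
    by (rule sum.swap)
  also have "\<dots> = 1"
    using inner stationary_sum_eq_1[of m] by simp
  finally show ?thesis .
qed

lemma block_entropy_concave:
  "block_entropy Q (Suc (Suc m)) + block_entropy Q m \<le> 2 * block_entropy Q (Suc m)"
proof -
  let ?A = "words (Suc (Suc m)) :: 'x list set"
  let ?p = "Q (Suc (Suc m))"
  let ?q = "markov_extension Q m"
  have positive: "Q (Suc m) (butlast xs) > 0 \<and> Q (Suc m) (tl xs) > 0 \<and> Q m (tl (butlast xs)) > 0"
    if "xs \<in> ?A" "?p xs > 0" for xs
    using that stationary_le_butlast[of xs "Suc m"] stationary_le_tl[of xs "Suc m"]
      stationary_le_tl[of "butlast xs" m] by simp
  have "(\<Sum>xs\<in>?A. ?p xs * log 2 (?q xs / ?p xs)) = (\<Sum>xs\<in>?A.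
     ?p xs * log 2 (Q (Suc m) (butlast xs)) + ?p xs * log 2 (Q (Suc m) (tl xs))
     - ?p xs * log 2 (Q m (tl (butlast xs))) - ?p xs * log 2 (?p xs))"
  proof (rule sum.cong)
    fix xs assume "xs \<in> ?A"
    show "?p xs * log 2 (?q xs / ?p xs) =
      ?p xs * log 2 (Q (Suc m) (butlast xs)) + ?p xs * log 2 (Q (Suc m) (tl xs))
      - ?p xs * log 2 (Q m (tl (butlast xs))) - ?p xs * log 2 (?p xs)"
    proof (cases "?p xs = 0")
      case False
      with stationary_nonneg[of "Suc (Suc m)" xs] have "?p xs > 0" by simp
      with positive[OF \<open>xs \<in> ?A\<close>] show ?thesis
        unfolding markov_extension_def by (simp add: log_divide_pos log_mult_pos algebra_simps)
    qed simp
  qed simp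
  also have "\<dots> = block_entropy Q (Suc (Suc m)) + block_entropy Q m - 2 * block_entropy Q (Suc m)"
    unfolding sum_subtractf sum.distrib entropy2_eq
      stationary_sum_butlast[of "Suc m" "\<lambda>ys. log 2 (Q (Suc m) ys)"]
      stationary_sum_tl[of "Suc m" "\<lambda>ys. log 2 (Q (Suc m) ys)"]
      stationary_sum_butlast[of "Suc m" "\<lambda>ys. log 2 (Q m (tl ys))"]
      stationary_sum_tl[of m "\<lambda>ys. log 2 (Q m ys)"]
    by simp
  finally have "(\<Sum>xs\<in>?A. ?p xs * log 2 (?q xs / ?p xs)) =
    block_entropy Q (Suc (Suc m)) + block_entropy Q m - 2 * block_entropy Q (Suc m)" .
  moreover have "(\<Sum>xs\<in>?A. ?p xs * log 2 (?q xs / ?p xs)) \<le> log 2 (\<Sum>xs\<in>?A. ?q xs)"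
    using positive stationary_nonneg stationary_sum_eq_1
    by (intro gibbs_inequality) (auto simp: finite_words markov_extension_def)
  ultimately show ?thesis
    by (simp add: sum_markov_extension)
qed

lemma cond_entropy_last_le_block_entropy:
  "real n * cond_entropy_last Q n \<le> block_entropy Q n"
proof (induction n)
  case 0
  show ?case using block_entropy_0 by simp
next
  case (Suc n)
  then show ?case
  proof (cases n)
    case 0
    then show ?thesis using cond_entropy_last_eq_diff[of 0] block_entropy_0 by simp
  next
    case (Suc k)
    have "cond_entropy_last Q (Suc n) \<le> cond_entropy_last Q n"
      using block_entropy_concave[of k] by (simp add: Suc cond_entropy_last_eq_diff)
    then have "real (Suc n) * cond_entropy_last Q (Suc n) \<le>
        real n * cond_entropy_last Q n + cond_entropy_last Q (Suc n)"
      by (simp add: algebra_simps mult_left_mono)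
    also have "\<dots> \<le> block_entropy Q (Suc n)"
      using Suc.IH by (simp add: cond_entropy_last_eq_diff)
    finally show ?thesis .
  qed
qed

end

theorem mainTheorem6:
  fixes f :: "'z::finite \<Rightarrow> 'x::finite \<Rightarrow> bool list"
    and g :: "'z \<Rightarrow> 'x \<Rightarrow> 'z"
    and l :: nat
    and P :: "'z \<times> 'x list \<Rightarrow> real"
  assumes IL: "info_lossless f g"
    and irr: "irreducible_matrix (kraft_matrix f g)"
    and l_pos: "l \<ge> 1"
    and P: "is_pmf_on (UNIV \<times> words l) P"
  defines "c \<equiv> 2 * log 2 (real (card (UNIV :: 'z set))) + (real (card (UNIV :: 'z set)) - 1) * real (L_max f)"
    and "EL \<equiv> (\<Sum>(z, xs)\<in>UNIV \<times> words l. P (z, xs) * real (length (fstar f g z xs)))"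
    and "PX \<equiv> (\<lambda>xs. \<Sum>z\<in>UNIV. P (z, xs))"
  shows "EL / real l \<ge> entropy2 (UNIV \<times> words l) P / real l - c / real l
       \<and> entropy2 (UNIV \<times> words l) P / real l - c / real l
           \<ge> entropy2 (words l) PX / real l - c / real l
       \<and> (\<forall>Q. stationary_process Q \<and> (\<forall>xs\<in>words l. PX xs = Q l xs)
            \<longrightarrow> EL / real l \<ge> cond_entropy_last Q l - c / real l)"
proof -
  let ?H = "entropy2 (UNIV \<times> words l) P"
  have "real l > 0" using l_pos by simp
  have coding: "?H \<le> EL + c"
    using entropy2_le_expected_length[OF IL irr P] unfolding c_def EL_def .
  have marginal: "entropy2 (words l) PX \<le> ?H"
    using entropy2_marginal_le[OF P] unfolding PX_def .
  have coding_per_symbol: "?H / real l - c / real l \<le> EL / real l"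
    using coding \<open>real l > 0\<close> by (simp add: diff_divide_distrib[symmetric] divide_right_mono)
  have entropy_rate: "cond_entropy_last Q l \<le> ?H / real l"
    if "stationary_process Q" and "\<forall>xs\<in>words l. PX xs = Q l xs" for Q
  proof -
    have "entropy2 (words l) PX = block_entropy Q l"
      unfolding entropy2_def using that(2) by (intro arg_cong[where f = uminus] sum.cong) auto
    then have "real l * cond_entropy_last Q l \<le> ?H"
      using cond_entropy_last_le_block_entropy[OF that(1), of l] marginal by simp
    then show ?thesis
      using \<open>real l > 0\<close> by (simp add: pos_le_divide_eq mult.commute)
  qed
  show ?thesis
  proof (intro conjI allI impI)
    show "?H / real l - c / real l \<le> EL / real l" by (fact coding_per_symbol)
    show "entropy2 (words l) PX / real l - c / real l \<le> ?H / real l - c / real l"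
      using marginal \<open>real l > 0\<close> by (simp add: divide_right_mono)
    fix Q
    assume "stationary_process Q \<and> (\<forall>xs\<in>words l. PX xs = Q l xs)"
    with entropy_rate[of Q] coding_per_symbol show "cond_entropy_last Q l - c / real l \<le> EL / real l"
      by linarith
  qed
qed

end
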